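(* Let $p\in(0,1)$ and let $\mathcal{F},\mathcal{G}\subseteq 2^{[n]}$ be cross-Sperner families. Then $\mu_p(\mathcal{F})^{1/2}+\mu_p(\mathcal{G})^{1/2}\le 1$.
   Context: Families $\mathcal{F},\mathcal{G}\subseteq 2^{[n]}$ are cross-Sperner if for all $F\in\mathcal{F}$ and $G\in\mathcal{G}$ neither $F\subseteq G$ nor $G\subseteq F$. For $p\in(0,1)$ and $F\subseteq[n]$, $\mu_p(F)=p^{|F|}(1-p)^{n-|F|}$, and $\mu_p(\mathcal{F})=\sum_{F\in\mathcal{F}}\mu_p(F)$. *)

theory Defs
  imports Main Complex_Main
begin

definition cross_Sperner :: "'a set set \<Rightarrow> 'a set set \<Rightarrow> bool" where
  "cross_Sperner \<F> \<G> \<longleftrightarrow> (\<forall>F\<in>\<F>. \<forall>G\<in>\<G>. \<not> F \<subseteq> G \<and> \<not> G \<subseteq> F)"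

definition mu_p :: "real \<Rightarrow> nat \<Rightarrow> nat set \<Rightarrow> real" where
  "mu_p p n F = p ^ card F * (1 - p) ^ (n - card F)"

definition mu_p_fam :: "real \<Rightarrow> nat \<Rightarrow> nat set set \<Rightarrow> real" where
  "mu_p_fam p n \<F> = (\<Sum>F\<in>\<F>. mu_p p n F)"

end

theory Submission
  imports Defs
begin

text \<open>The indicator of \<open>\<F>\<close> is at most the product of the indicators of its up-closure
  \<open>U\<^sub>\<F>\<close> (an increasing function) and its down-closure \<open>D\<^sub>\<F>\<close> (a decreasing one), so the
  Harris inequality gives \<open>\<mu>\<^sub>p(\<F>) \<le> \<mu>\<^sub>p(U\<^sub>\<F>) \<mu>\<^sub>p(D\<^sub>\<F>)\<close>, and likewise for \<open>\<G>\<close>.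
  Cross-Sperner means exactly that \<open>U\<^sub>\<F>\<close> is disjoint from \<open>D\<^sub>\<G>\<close> and \<open>U\<^sub>\<G>\<close> from \<open>D\<^sub>\<F>\<close>,
  so \<open>\<mu>\<^sub>p(U\<^sub>\<F>) + \<mu>\<^sub>p(D\<^sub>\<G>) \<le> 1\<close> and \<open>\<mu>\<^sub>p(U\<^sub>\<G>) + \<mu>\<^sub>p(D\<^sub>\<F>) \<le> 1\<close>.  Bounding each square root
  by AM-GM and adding the four terms gives the claim.\<close>

definition expect_p :: "real \<Rightarrow> 'a set \<Rightarrow> ('a set \<Rightarrow> real) \<Rightarrow> real" where
  "expect_p p S h = (\<Sum>X\<in>Pow S. p ^ card X * (1 - p) ^ (card S - card X) * h X)"

lemma expect_p_empty [simp]: "expect_p p {} h = h {}"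
  by (simp add: expect_p_def)

lemma expect_p_insert:
  assumes "finite S" "a \<notin> S"
  shows "expect_p p (insert a S) h
           = (1 - p) * expect_p p S h + p * expect_p p S (\<lambda>X. h (insert a X))"
proof -
  let ?w = "\<lambda>X. p ^ card X * (1 - p) ^ (card (insert a S) - card X) * h X"
  have inj: "inj_on (insert a) (Pow S)"
    using assms(2) by (intro inj_onI) (metis PowD insert_ident subsetD)
  have "expect_p p (insert a S) h = sum ?w (Pow S) + sum ?w (insert a ` Pow S)"
    unfolding expect_p_def Pow_insert using assms by (intro sum.union_disjoint) auto
  also have "sum ?w (Pow S) = (1 - p) * expect_p p S h"
    unfolding expect_p_def sum_distrib_left
  proof (rule sum.cong [OF refl])
    fix X assume "X \<in> Pow S"
    then have "card (insert a S) - card X = Suc (card S - card X)"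
      using assms by (simp add: card_mono Suc_diff_le)
    then show "?w X = (1 - p) * (p ^ card X * (1 - p) ^ (card S - card X) * h X)"
      by simp
  qed
  also have "sum ?w (insert a ` Pow S) = p * expect_p p S (\<lambda>X. h (insert a X))"
    unfolding expect_p_def sum_distrib_left sum.reindex [OF inj] o_def
  proof (rule sum.cong [OF refl])
    fix X assume "X \<in> Pow S"
    then have "finite X" "a \<notin> X"
      using assms finite_subset by auto
    then have "card (insert a X) = Suc (card X)"
      by simp
    then show "?w (insert a X)
        = p * (p ^ card X * (1 - p) ^ (card S - card X) * h (insert a X))"
      using assms by simp
  qed
  finally show ?thesis .
qed

lemma expect_p_const_one: "finite S \<Longrightarrow> expect_p p S (\<lambda>_. 1) = 1"
  by (induction S rule: finite_induct) (simp_all add: expect_p_insert algebra_simps)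

lemma expect_p_add: "expect_p p S (\<lambda>X. f X + g X) = expect_p p S f + expect_p p S g"
  unfolding expect_p_def by (simp add: algebra_simps sum.distrib)

lemma expect_p_mono:
  assumes "0 \<le> p" "p \<le> 1" "\<And>X. X \<subseteq> S \<Longrightarrow> f X \<le> g X"
  shows "expect_p p S f \<le> expect_p p S g"
  unfolding expect_p_def using assms by (intro sum_mono mult_left_mono) auto

lemma expect_p_nonneg:
  assumes "0 \<le> p" "p \<le> 1" "\<And>X. X \<subseteq> S \<Longrightarrow> 0 \<le> h X"
  shows "0 \<le> expect_p p S h"
  using expect_p_mono [of p S "\<lambda>_. 0" h] assms by (simp add: expect_p_def)

lemma expect_p_indicators_disjoint:
  assumes "finite S" "0 \<le> p" "p \<le> 1" "A \<inter> B = {}"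
  shows "expect_p p S (\<lambda>X. of_bool (X \<in> A)) + expect_p p S (\<lambda>X. of_bool (X \<in> B)) \<le> 1"
proof -
  have "expect_p p S (\<lambda>X. of_bool (X \<in> A)) + expect_p p S (\<lambda>X. of_bool (X \<in> B))
      = expect_p p S (\<lambda>X. of_bool (X \<in> A) + of_bool (X \<in> B))"
    by (simp add: expect_p_add)
  also have "\<dots> \<le> expect_p p S (\<lambda>_. 1)"
    using assms by (intro expect_p_mono) auto
  finally show ?thesis
    using expect_p_const_one [OF assms(1)] by simp
qed

text \<open>Conditioning on whether \<open>a\<close> lies in the random set splits each expectation into
  the branches \<open>f\<^sub>0, f\<^sub>1\<close> and \<open>g\<^sub>0, g\<^sub>1\<close>; since \<open>f\<^sub>0 \<le> f\<^sub>1\<close> and \<open>g\<^sub>1 \<le> g\<^sub>0\<close>, the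
  two-point Chebyshev inequality closes the induction step.\<close>

theorem harris_inequality:
  assumes "finite S" "0 \<le> p" "p \<le> 1"
    and "mono_on (Pow S) f" "antimono_on (Pow S) g"
  shows "expect_p p S (\<lambda>X. f X * g X) \<le> expect_p p S f * expect_p p S g"
  using assms(1,4,5)
proof (induction S arbitrary: f g rule: finite_induct)
  case empty
  then show ?case by simp
next
  case (insert a S)
  define f\<^sub>0 where "f\<^sub>0 = expect_p p S f"
  define f\<^sub>1 where "f\<^sub>1 = expect_p p S (\<lambda>X. f (insert a X))"
  define g\<^sub>0 where "g\<^sub>0 = expect_p p S g"
  define g\<^sub>1 where "g\<^sub>1 = expect_p p S (\<lambda>X. g (insert a X))"
  have f_mono: "f X \<le> f Y" if "X \<subseteq> Y" "Y \<subseteq> insert a S" for X Y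
    using that by (intro mono_onD [OF insert.prems(1)]) auto
  have g_anti: "g Y \<le> g X" if "X \<subseteq> Y" "Y \<subseteq> insert a S" for X Y
    using monotone_onD [OF insert.prems(2)] that by auto
  have "expect_p p S (\<lambda>X. f X * g X) \<le> f\<^sub>0 * g\<^sub>0"
    unfolding f\<^sub>0_def g\<^sub>0_def
  proof (rule insert.IH)
    show "mono_on (Pow S) f"
      by (rule mono_onI) (simp add: f_mono subset_insertI2)
    show "antimono_on (Pow S) g"
      by (rule monotone_onI) (simp add: g_anti subset_insertI2)
  qed
  moreover have "expect_p p S (\<lambda>X. f (insert a X) * g (insert a X)) \<le> f\<^sub>1 * g\<^sub>1"
    unfolding f\<^sub>1_def g\<^sub>1_def
  proof (rule insert.IH)
    show "mono_on (Pow S) (\<lambda>X. f (insert a X))"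
      by (rule mono_onI) (intro f_mono; auto)
    show "antimono_on (Pow S) (\<lambda>X. g (insert a X))"
      by (rule monotone_onI) (intro g_anti; auto)
  qed
  ultimately have "expect_p p (insert a S) (\<lambda>X. f X * g X)
      \<le> (1 - p) * (f\<^sub>0 * g\<^sub>0) + p * (f\<^sub>1 * g\<^sub>1)"
    using assms insert.hyps by (simp add: expect_p_insert add_mono mult_left_mono)
  also have "\<dots> \<le> ((1 - p) * f\<^sub>0 + p * f\<^sub>1) * ((1 - p) * g\<^sub>0 + p * g\<^sub>1)"
  proof -
    have "f\<^sub>0 \<le> f\<^sub>1"
      unfolding f\<^sub>0_def f\<^sub>1_def using assms by (intro expect_p_mono f_mono) auto
    moreover have "g\<^sub>1 \<le> g\<^sub>0"
      unfolding g\<^sub>0_def g\<^sub>1_def using assms by (intro expect_p_mono g_anti) auto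
    ultimately have "0 \<le> p * (1 - p) * ((f\<^sub>1 - f\<^sub>0) * (g\<^sub>0 - g\<^sub>1))"
      using assms by simp
    then show ?thesis by (simp add: algebra_simps)
  qed
  also have "\<dots> = expect_p p (insert a S) f * expect_p p (insert a S) g"
    using insert.hyps by (simp add: expect_p_insert f\<^sub>0_def f\<^sub>1_def g\<^sub>0_def g\<^sub>1_def)
  finally show ?case .
qed

lemma mu_p_fam_eq_expect_p:
  assumes "finite S" "card S = n" "\<H> \<subseteq> Pow S"
  shows "mu_p_fam p n \<H> = expect_p p S (\<lambda>X. of_bool (X \<in> \<H>))"
proof -
  have "mu_p_fam p n \<H> = (\<Sum>X\<in>Pow S \<inter> \<H>. p ^ card X * (1 - p) ^ (card S - card X))"
    unfolding mu_p_fam_def mu_p_def using assms by (simp add: Int_absorb1)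
  also have "\<dots> = expect_p p S (\<lambda>X. of_bool (X \<in> \<H>))"
    unfolding expect_p_def using assms(1) by (simp add: sum.inter_restrict if_distrib)
  finally show ?thesis .
qed

definition up_closure :: "'a set set \<Rightarrow> 'a set set" where
  "up_closure \<H> = {X. \<exists>H\<in>\<H>. H \<subseteq> X}"

definition down_closure :: "'a set set \<Rightarrow> 'a set set" where
  "down_closure \<H> = {X. \<exists>H\<in>\<H>. X \<subseteq> H}"

lemma up_closure_upward: "X \<in> up_closure \<H> \<Longrightarrow> X \<subseteq> Y \<Longrightarrow> Y \<in> up_closure \<H>"
  unfolding up_closure_def by blast

lemma down_closure_downward: "Y \<in> down_closure \<H> \<Longrightarrow> X \<subseteq> Y \<Longrightarrow> X \<in> down_closure \<H>"
  unfolding down_closure_def by blast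

lemma mu_p_fam_le_up_down:
  assumes "finite S" "card S = n" "\<H> \<subseteq> Pow S" "0 \<le> p" "p \<le> 1"
  shows "mu_p_fam p n \<H>
    \<le> expect_p p S (\<lambda>X. of_bool (X \<in> up_closure \<H>))
       * expect_p p S (\<lambda>X. of_bool (X \<in> down_closure \<H>))"
proof -
  have "mu_p_fam p n \<H>
      \<le> expect_p p S (\<lambda>X. of_bool (X \<in> up_closure \<H>) * of_bool (X \<in> down_closure \<H>))"
    unfolding mu_p_fam_eq_expect_p [OF assms(1-3)] using assms(4,5)
    by (intro expect_p_mono) (auto simp: up_closure_def down_closure_def)
  also have "\<dots> \<le> expect_p p S (\<lambda>X. of_bool (X \<in> up_closure \<H>))
                 * expect_p p S (\<lambda>X. of_bool (X \<in> down_closure \<H>))"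
    using assms(1,4,5) by (intro harris_inequality mono_onI monotone_onI)
      (auto dest: up_closure_upward down_closure_downward)
  finally show ?thesis .
qed

lemma cross_Sperner_commute: "cross_Sperner \<F> \<G> \<longleftrightarrow> cross_Sperner \<G> \<F>"
  unfolding cross_Sperner_def by blast

lemma cross_Sperner_up_down_disjoint:
  "cross_Sperner \<F> \<G> \<Longrightarrow> up_closure \<F> \<inter> down_closure \<G> = {}"
  unfolding cross_Sperner_def up_closure_def down_closure_def by (blast intro: order_trans)

theorem theorem2p2:
  fixes p :: real and n :: nat and \<F> \<G> :: "nat set set"
  assumes "0 < p" "p < 1"
    and "\<F> \<subseteq> Pow {1..n}" "\<G> \<subseteq> Pow {1..n}"
    and "cross_Sperner \<F> \<G>"
  shows "sqrt (mu_p_fam p n \<F>) + sqrt (mu_p_fam p n \<G>) \<le> 1"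
proof -
  define E where "E \<H> = expect_p p {1..n} (\<lambda>X. of_bool (X \<in> \<H>))" for \<H>
  have p: "0 \<le> p" "p \<le> 1" using assms(1,2) by simp_all
  have am_gm: "sqrt (mu_p_fam p n \<H>) \<le> (E (up_closure \<H>) + E (down_closure \<H>)) / 2"
    if "\<H> \<subseteq> Pow {1..n}" for \<H>
  proof -
    have "sqrt (mu_p_fam p n \<H>) \<le> sqrt (E (up_closure \<H>) * E (down_closure \<H>))"
      using mu_p_fam_le_up_down [OF _ _ that p] unfolding E_def by simp
    also have "\<dots> \<le> (E (up_closure \<H>) + E (down_closure \<H>)) / 2"
      using p unfolding E_def by (intro arith_geo_mean_sqrt expect_p_nonneg) auto
    finally show ?thesis .
  qed
  have "E (up_closure \<F>) + E (down_closure \<G>) \<le> 1"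
    "E (up_closure \<G>) + E (down_closure \<F>) \<le> 1"
    using assms(5) p cross_Sperner_commute unfolding E_def
    by (auto intro!: expect_p_indicators_disjoint cross_Sperner_up_down_disjoint)
  then show ?thesis
    using am_gm [OF assms(3)] am_gm [OF assms(4)] by argo
qed

end
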